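(* Let $R$ be a commutative ring with $\mathbb{Q}\subseteq R$, $\mathcal{A}$ a commutative unital $R$-algebra, and $\mathcal{E}$ a finitely generated projective $\mathcal{A}$-module with a symmetric, strongly nondegenerate, full $\mathcal{A}$-bilinear form $\langle\cdot,\cdot\rangle$. Let $\omega\in\Omega^r_{\mathcal{C}}(\mathcal{E})$ with $r\ge2$. Then there exist unique maps $\pi^{(p)}_\omega\in\operatorname{SDer}^p(\mathcal{A},\Omega^{r-2p}_{\mathcal{C}}(\mathcal{E}))$, one for each $p$ with $0\le2p\le r$, with two properties: (i) $\pi^{(0)}_\omega=\omega$; (ii) for every $p$ with $2(p+1)\le r$ and all $a_1,\dots,a_p\in\mathcal{A}$, the map $\pi^{(p+1)}_\omega(a_1,\dots,a_p,\cdot)$ is the symbol of $\pi^{(p)}_\omega(a_1,\dots,a_p)$. Concretely, $\pi^{(p+1)}_\omega(a_1,\dots,a_p,a)(x_1,\dots,x_{r-2p-2})=\sigma_{\pi^{(p)}_\omega(a_1,\dots,a_p)}(x_1,\dots,x_{r-2p-2})(a)$ for all $a\in\mathcal{A}$ and $x_i\in\mathcal{E}$.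
   Context: Strongly nondegenerate: $\mathcal{E}\to\operatorname{Hom}_{\mathcal{A}}(\mathcal{E},\mathcal{A})$ is an isomorphism. Full: every $a\in\mathcal{A}$ is a finite sum $\sum_i\langle x_i,y_i\rangle$. $\operatorname{Der}(\mathcal{A})$: $R$-linear derivations of $\mathcal{A}$. $\Omega^0_{\mathcal{C}}(\mathcal{E})=\mathcal{A}$. For $r\ge1$, $\Omega^r_{\mathcal{C}}(\mathcal{E})$ is the set of $\omega\in\operatorname{Hom}_R(\mathcal{E}^{\otimes_R r},\mathcal{A})$ satisfying two conditions: (a) $\omega(x_1,\dots,x_{r-1},ax_r)=a\,\omega(x_1,\dots,x_r)$ for all $a\in\mathcal{A}$; (b) if $r\ge2$, there is an $R$-multilinear map $\sigma_\omega:\mathcal{E}^{\otimes_R(r-2)}\to\operatorname{Der}(\mathcal{A})$ (the symbol of $\omega$) such that, for all $1\le i\le r-1$, $\omega(\dots,x_i,x_{i+1},\dots)+\omega(\dots,x_{i+1},x_i,\dots)=\sigma_\omega(x_1,\dots,\widehat{x_i},\widehat{x_{i+1}},\dots,x_r)\langle x_i,x_{i+1}\rangle$. The symbol is uniquely determined by fullness. For an $\mathcal{A}$-module $\mathcal{F}$, $\operatorname{SDer}^p(\mathcal{A},\mathcal{F})$ is the set of $R$-multilinear maps $\mathcal{A}^{\otimes_R p}\to\mathcal{F}$ that are symmetric and a derivation in each entry. By convention $\operatorname{SDer}^0(\mathcal{A},\mathcal{F})=\mathcal{F}$. *)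

theory Defs
  imports Main "HOL-Library.Multiset"
begin

text \<open>R is a type 'r, A is a type 'a with structure map alg : R -> A (a unital ring hom),
  E is a type 'e (abelian group) with A-action smul; R acts on E via alg.
  An element of Hom_R(E^{\<otimes> r}, A) is represented by an R-multilinear map on
  lists of length r (values on other lists are irrelevant).
  A family of maps pi^(p) : A^p -> Omega^{r-2p} is represented by one function
  pi :: 'a list => 'e list => 'a, where p is the length of the first argument.\<close>

definition ring_hom_map :: "('r::comm_ring_1 \<Rightarrow> 'a::comm_ring_1) \<Rightarrow> bool" where
  "ring_hom_map alg \<longleftrightarrow> alg 1 = 1 \<and> (\<forall>x y. alg (x + y) = alg x + alg y \<and> alg (x * y) = alg x * alg y)"

definition is_module :: "('a::comm_ring_1 \<Rightarrow> 'e::ab_group_add \<Rightarrow> 'e) \<Rightarrow> bool" where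
  "is_module smul \<longleftrightarrow> (\<forall>a b x y.
     smul a (x + y) = smul a x + smul a y \<and> smul (a + b) x = smul a x + smul b x \<and>
     smul (a * b) x = smul a (smul b x) \<and> smul 1 x = x)"

text \<open>Finitely generated projective: a direct summand of A^n for some n, i.e. there are
  A-linear maps iota : E -> A^n and q : A^n -> E with q o iota = id (A^n is modelled
  as functions nat => 'a vanishing outside {..<n}).\<close>
definition fg_projective :: "('a::comm_ring_1 \<Rightarrow> 'e::ab_group_add \<Rightarrow> 'e) \<Rightarrow> bool" where
  "fg_projective smul \<longleftrightarrow> (\<exists>(n::nat) (\<iota>::'e \<Rightarrow> nat \<Rightarrow> 'a) (q::(nat \<Rightarrow> 'a) \<Rightarrow> 'e).
     (\<forall>x i. n \<le> i \<longrightarrow> \<iota> x i = 0) \<and>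
     (\<forall>x y a. \<iota> (x + y) = (\<lambda>i. \<iota> x i + \<iota> y i) \<and> \<iota> (smul a x) = (\<lambda>i. a * \<iota> x i)) \<and>
     (\<forall>v w a. (\<forall>i. n \<le> i \<longrightarrow> v i = 0) \<and> (\<forall>i. n \<le> i \<longrightarrow> w i = 0) \<longrightarrow>
        q (\<lambda>i. v i + w i) = q v + q w \<and> q (\<lambda>i. a * v i) = smul a (q v)) \<and>
     (\<forall>x. q (\<iota> x) = x))"

definition A_linear :: "('a::comm_ring_1 \<Rightarrow> 'e::ab_group_add \<Rightarrow> 'e) \<Rightarrow> ('e \<Rightarrow> 'a) \<Rightarrow> bool" where
  "A_linear smul f \<longleftrightarrow> (\<forall>x y a. f (x + y) = f x + f y \<and> f (smul a x) = a * f x)"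

definition bilinear_form :: "('a::comm_ring_1 \<Rightarrow> 'e::ab_group_add \<Rightarrow> 'e) \<Rightarrow> ('e \<Rightarrow> 'e \<Rightarrow> 'a) \<Rightarrow> bool" where
  "bilinear_form smul B \<longleftrightarrow> (\<forall>x. A_linear smul (B x)) \<and> (\<forall>y. A_linear smul (\<lambda>x. B x y))"

definition symmetric_form :: "('e \<Rightarrow> 'e \<Rightarrow> 'a) \<Rightarrow> bool" where
  "symmetric_form B \<longleftrightarrow> (\<forall>x y. B x y = B y x)"

definition strongly_nondegenerate :: "('a::comm_ring_1 \<Rightarrow> 'e::ab_group_add \<Rightarrow> 'e) \<Rightarrow> ('e \<Rightarrow> 'e \<Rightarrow> 'a) \<Rightarrow> bool" where
  "strongly_nondegenerate smul B \<longleftrightarrow> inj B \<and> (\<forall>f. A_linear smul f \<longrightarrow> (\<exists>x. B x = f))"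

definition full_form :: "('e \<Rightarrow> 'e \<Rightarrow> 'a::comm_ring_1) \<Rightarrow> bool" where
  "full_form B \<longleftrightarrow> (\<forall>a. \<exists>ps. a = sum_list (map (\<lambda>(x, y). B x y) ps))"

definition multilin_R :: "('r::comm_ring_1 \<Rightarrow> 'a::comm_ring_1) \<Rightarrow> ('a \<Rightarrow> 'e::ab_group_add \<Rightarrow> 'e) \<Rightarrow> nat \<Rightarrow> ('e list \<Rightarrow> 'a) \<Rightarrow> bool" where
  "multilin_R alg smul n f \<longleftrightarrow> (\<forall>xs i x y c. length xs = n \<and> i < n \<longrightarrow>
     f (xs[i := x + y]) = f (xs[i := x]) + f (xs[i := y]) \<and>
     f (xs[i := smul (alg c) x]) = alg c * f (xs[i := x]))"

definition is_der :: "('r::comm_ring_1 \<Rightarrow> 'a::comm_ring_1) \<Rightarrow> ('a \<Rightarrow> 'a) \<Rightarrow> bool" where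
  "is_der alg d \<longleftrightarrow> (\<forall>a b c. d (a + b) = d a + d b \<and> d (alg c * a) = alg c * d a \<and>
     d (a * b) = a * d b + b * d a)"

definition is_symbol :: "('r::comm_ring_1 \<Rightarrow> 'a::comm_ring_1) \<Rightarrow> ('a \<Rightarrow> 'e::ab_group_add \<Rightarrow> 'e) \<Rightarrow>
    ('e \<Rightarrow> 'e \<Rightarrow> 'a) \<Rightarrow> nat \<Rightarrow> ('e list \<Rightarrow> 'a) \<Rightarrow> ('e list \<Rightarrow> 'a \<Rightarrow> 'a) \<Rightarrow> bool" where
  "is_symbol alg smul B r \<omega> \<sigma> \<longleftrightarrow>
     (\<forall>a. multilin_R alg smul (r - 2) (\<lambda>xs. \<sigma> xs a)) \<and>
     (\<forall>xs. length xs = r - 2 \<longrightarrow> is_der alg (\<sigma> xs)) \<and>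
     (\<forall>us vs x y. length us + length vs = r - 2 \<longrightarrow>
        \<omega> (us @ [x, y] @ vs) + \<omega> (us @ [y, x] @ vs) = \<sigma> (us @ vs) (B x y))"

text \<open>Omega^r_C(E). For r = 0 every map is allowed (the element is its value at []).\<close>
definition Omega_C :: "('r::comm_ring_1 \<Rightarrow> 'a::comm_ring_1) \<Rightarrow> ('a \<Rightarrow> 'e::ab_group_add \<Rightarrow> 'e) \<Rightarrow>
    ('e \<Rightarrow> 'e \<Rightarrow> 'a) \<Rightarrow> nat \<Rightarrow> ('e list \<Rightarrow> 'a) \<Rightarrow> bool" where
  "Omega_C alg smul B r \<omega> \<longleftrightarrow>
     multilin_R alg smul r \<omega> \<and>
     (1 \<le> r \<longrightarrow> (\<forall>xs x a. length xs = r - 1 \<longrightarrow> \<omega> (xs @ [smul a x]) = a * \<omega> (xs @ [x]))) \<and>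
     (2 \<le> r \<longrightarrow> (\<exists>\<sigma>. is_symbol alg smul B r \<omega> \<sigma>))"

text \<open>The A-module structure on Omega is pointwise; equality in Omega^(r-2p) is equality on
  argument lists of length r-2p.\<close>
definition SDer_Omega :: "('r::comm_ring_1 \<Rightarrow> 'a::comm_ring_1) \<Rightarrow> ('a \<Rightarrow> 'e::ab_group_add \<Rightarrow> 'e) \<Rightarrow>
    ('e \<Rightarrow> 'e \<Rightarrow> 'a) \<Rightarrow> nat \<Rightarrow> nat \<Rightarrow> ('a list \<Rightarrow> 'e list \<Rightarrow> 'a) \<Rightarrow> bool" where
  "SDer_Omega alg smul B r p \<pi> \<longleftrightarrow>
     (\<forall>as. length as = p \<longrightarrow> Omega_C alg smul B (r - 2 * p) (\<pi> as)) \<and>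
     (\<forall>as i a b c xs. length as = p \<and> i < p \<and> length xs = r - 2 * p \<longrightarrow>
        \<pi> (as[i := a + b]) xs = \<pi> (as[i := a]) xs + \<pi> (as[i := b]) xs \<and>
        \<pi> (as[i := alg c * a]) xs = alg c * \<pi> (as[i := a]) xs \<and>
        \<pi> (as[i := a * b]) xs = a * \<pi> (as[i := b]) xs + b * \<pi> (as[i := a]) xs) \<and>
     (\<forall>as bs xs. length as = p \<and> mset as = mset bs \<and> length xs = r - 2 * p \<longrightarrow>
        \<pi> as xs = \<pi> bs xs)"

definition symbol_family :: "('r::comm_ring_1 \<Rightarrow> 'a::comm_ring_1) \<Rightarrow> ('a \<Rightarrow> 'e::ab_group_add \<Rightarrow> 'e) \<Rightarrow>
    ('e \<Rightarrow> 'e \<Rightarrow> 'a) \<Rightarrow> nat \<Rightarrow> ('e list \<Rightarrow> 'a) \<Rightarrow> ('a list \<Rightarrow> 'e list \<Rightarrow> 'a) \<Rightarrow> bool" where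
  "symbol_family alg smul B r \<omega> \<pi> \<longleftrightarrow>
     (\<forall>p. 2 * p \<le> r \<longrightarrow> SDer_Omega alg smul B r p \<pi>) \<and>
     (\<forall>xs. length xs = r \<longrightarrow> \<pi> [] xs = \<omega> xs) \<and>
     (\<forall>as. 2 * (length as + 1) \<le> r \<longrightarrow>
        is_symbol alg smul B (r - 2 * length as) (\<pi> as) (\<lambda>xs a. \<pi> (as @ [a]) xs))"

end

theory Submission
  imports Defs "HOL.Modules"
begin

text \<open>Since the form is full, every element of A is a sum of values \<open>\<langle>x,y\<rangle>\<close>, so an additive
  map on A, in particular a derivation, is determined by its values there. Hence a symbol is
  unique and is given by the explicit formula
  \<open>\<sigma>(zs)(\<Sum>\<langle>x\<^sub>i,y\<^sub>i\<rangle>) = \<Sum> \<omega>(x\<^sub>i,y\<^sub>i,zs) + \<omega>(y\<^sub>i,x\<^sub>i,zs)\<close>.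
  Iterating this formula defines \<open>\<pi>\<^sup>p\<close>; the identities defining \<open>\<Omega>\<^sub>C\<close> pass from \<open>\<omega>\<close> to each value
  of its symbol, every entry is a derivation (the newest one by the symbol property, the older
  ones because the formula is additive in \<open>\<omega>\<close>), and symmetry in the entries reduces to the
  symmetry of the symbol of a symbol.\<close>

lemma additive_sum_list:
  assumes "additive h"
  shows "h (\<Sum>p\<leftarrow>ps. f p) = (\<Sum>p\<leftarrow>ps. h (f p))"
  by (induction ps) (simp_all add: additive.zero[OF assms] additive.add[OF assms])

lemma full_form_additive_ext:
  assumes full: "full_form B" and "additive h" "additive h'"
    and eq: "\<And>x y. h (B x y) = h' (B x y)"
  shows "h a = h' a"
proof -
  obtain ps where a: "a = (\<Sum>(x, y)\<leftarrow>ps. B x y)"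
    using full unfolding full_form_def by blast
  have "h a = (\<Sum>p\<leftarrow>ps. h (B (fst p) (snd p)))"
    unfolding a additive_sum_list[OF assms(2)] by (simp add: case_prod_unfold)
  also have "\<dots> = (\<Sum>p\<leftarrow>ps. h' (B (fst p) (snd p)))"
    by (simp add: eq)
  also have "\<dots> = h' a"
    unfolding a additive_sum_list[OF assms(3)] by (simp add: case_prod_unfold)
  finally show ?thesis .
qed

lemma is_der_additive: "is_der alg d \<Longrightarrow> additive d"
  by (simp add: is_der_def additive_def)

lemma is_der_add:
  assumes d: "is_der alg d" and d': "is_der alg d'"
  shows "is_der alg (\<lambda>a. d a + d' a)"
  unfolding is_der_def
proof (intro allI conjI)
  fix a b c
  note D = d[unfolded is_der_def, rule_format, of a b c]
  note D' = d'[unfolded is_der_def, rule_format, of a b c]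
  show "d (a + b) + d' (a + b) = d a + d' a + (d b + d' b)"
    by (simp only: D D' ac_simps)
  show "d (alg c * a) + d' (alg c * a) = alg c * (d a + d' a)"
    by (simp only: D D' distrib_left)
  show "d (a * b) + d' (a * b) = a * (d b + d' b) + b * (d a + d' a)"
    by (simp only: D D' distrib_left ac_simps)
qed

lemma is_der_sum_list:
  "(\<And>p. p \<in> set ps \<Longrightarrow> is_der alg (D p)) \<Longrightarrow> is_der alg (\<lambda>a. \<Sum>p\<leftarrow>ps. D p a)"
proof (induction ps)
  case Nil
  show ?case by (simp add: is_der_def)
next
  case (Cons p ps)
  then show ?case using is_der_add[of alg "D p"] by simp
qed

lemma multilin_R_add:
  "multilin_R alg smul n f \<Longrightarrow> multilin_R alg smul n g \<Longrightarrow> multilin_R alg smul n (\<lambda>xs. f xs + g xs)"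
  by (simp add: multilin_R_def algebra_simps)

lemma multilin_R_sum_list:
  "(\<And>p. p \<in> set ps \<Longrightarrow> multilin_R alg smul n (F p)) \<Longrightarrow>
     multilin_R alg smul n (\<lambda>xs. \<Sum>p\<leftarrow>ps. F p xs)"
proof (induction ps)
  case Nil
  show ?case by (simp add: multilin_R_def)
next
  case (Cons p ps)
  then show ?case using multilin_R_add[of alg smul n "F p"] by simp
qed

lemma multilin_R_Cons2:
  fixes f :: "'e::ab_group_add list \<Rightarrow> 'a::comm_ring_1"
  assumes "multilin_R alg smul (Suc (Suc n)) f"
  shows "multilin_R alg smul n (\<lambda>zs. f (x # y # zs))"
  unfolding multilin_R_def
proof (intro allI impI)
  fix xs :: "'e list" and i u v c assume "length xs = n \<and> i < n"
  then show "f (x # y # xs[i := u + v]) = f (x # y # xs[i := u]) + f (x # y # xs[i := v]) \<and>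
       f (x # y # xs[i := smul (alg c) u]) = alg c * f (x # y # xs[i := u])"
    using assms[unfolded multilin_R_def, rule_format, of "x # y # xs" "Suc (Suc i)" u v c] by simp
qed

lemma multilin_R_cong:
  "(\<And>xs. length xs = n \<Longrightarrow> f xs = g xs) \<Longrightarrow> multilin_R alg smul n f \<Longrightarrow> multilin_R alg smul n g"
  unfolding multilin_R_def by (metis length_list_update)

lemma is_symbol_swapD:
  assumes "is_symbol alg smul B n \<omega> \<sigma>" "length us + length vs + 2 = n"
  shows "\<sigma> (us @ vs) (B x y) = \<omega> (us @ [x, y] @ vs) + \<omega> (us @ [y, x] @ vs)"
  using assms unfolding is_symbol_def by (metis add_diff_cancel_right')

lemma is_symbol_ConsD:
  assumes "is_symbol alg smul B n \<omega> \<sigma>" "length zs + 2 = n"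
  shows "\<sigma> zs (B x y) = \<omega> (x # y # zs) + \<omega> (y # x # zs)"
  using is_symbol_swapD[OF assms(1), of "[]" zs] assms(2) by simp

lemma is_symbol_is_der:
  assumes "is_symbol alg smul B n \<omega> \<sigma>" "length zs + 2 = n"
  shows "is_der alg (\<sigma> zs)"
  using assms unfolding is_symbol_def by auto

definition form_repr :: "('e \<Rightarrow> 'e \<Rightarrow> 'a::comm_ring_1) \<Rightarrow> 'a \<Rightarrow> ('e \<times> 'e) list" where
  "form_repr B c = (SOME ps. c = (\<Sum>(x, y)\<leftarrow>ps. B x y))"

lemma form_repr: "full_form B \<Longrightarrow> c = (\<Sum>(x, y)\<leftarrow>form_repr B c. B x y)"
  unfolding form_repr_def full_form_def by (rule someI_ex) blast

text \<open>The representation chosen by \<open>form_repr\<close> is irrelevant: every symbol of \<open>\<omega>\<close> agrees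
  with this formula.\<close>
definition symbol_of :: "('e \<Rightarrow> 'e \<Rightarrow> 'a::comm_ring_1) \<Rightarrow> ('e list \<Rightarrow> 'a) \<Rightarrow> 'e list \<Rightarrow> 'a \<Rightarrow> 'a" where
  "symbol_of B \<omega> zs c = (\<Sum>(x, y)\<leftarrow>form_repr B c. \<omega> (x # y # zs) + \<omega> (y # x # zs))"

lemma symbol_of_cong:
  "(\<And>x y. \<omega> (x # y # zs) = \<omega>' (x # y # zs)) \<Longrightarrow> symbol_of B \<omega> zs c = symbol_of B \<omega>' zs c"
  unfolding symbol_of_def by (simp add: case_prod_unfold)

lemma is_symbol_eq_symbol_of:
  assumes full: "full_form B" and sy: "is_symbol alg smul B n \<omega> \<sigma>" and zs: "length zs + 2 = n"
  shows "\<sigma> zs c = symbol_of B \<omega> zs c"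
proof -
  have "\<sigma> zs c = (\<Sum>p\<leftarrow>form_repr B c. \<sigma> zs (B (fst p) (snd p)))"
    by (subst form_repr[OF full, of c])
      (simp add: additive_sum_list[OF is_der_additive[OF is_symbol_is_der[OF sy zs]]] case_prod_unfold)
  then show ?thesis
    unfolding symbol_of_def by (simp add: is_symbol_ConsD[OF sy zs] case_prod_unfold)
qed

lemma is_symbol_symbol_of:
  assumes full: "full_form B" and sy: "is_symbol alg smul B n \<omega> \<sigma>" and n: "2 \<le> n"
  shows "is_symbol alg smul B n \<omega> (symbol_of B \<omega>)"
proof -
  have eq: "\<sigma> zs = symbol_of B \<omega> zs" if "length zs = n - 2" for zs
    using is_symbol_eq_symbol_of[OF full sy] that n by fastforce
  show ?thesis
    using sy unfolding is_symbol_def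
  proof (elim conjE, intro conjI allI impI)
    show "multilin_R alg smul (n - 2) (\<lambda>xs. symbol_of B \<omega> xs a)"
      if "\<forall>a. multilin_R alg smul (n - 2) (\<lambda>xs. \<sigma> xs a)" for a
      by (rule multilin_R_cong[OF _ that[rule_format, of a]]) (simp add: eq)
  qed (simp_all add: eq)
qed

lemma symbol_value_last_A_linear:
  assumes full: "full_form B" and om: "Omega_C alg smul B n \<omega>"
    and sy: "is_symbol alg smul B n \<omega> \<sigma>" and xs: "length xs + 3 = n"
  shows "\<sigma> (xs @ [smul c x]) a = c * \<sigma> (xs @ [x]) a"
proof -
  have l: "length (xs @ [z]) + 2 = n" for z
    using xs by simp
  have last: "\<omega> (u # v # xs @ [smul c x]) = c * \<omega> (u # v # xs @ [x])" for u v
    using om xs unfolding Omega_C_def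
    by (auto dest!: spec[where x = "u # v # xs"])
  have "additive (\<sigma> (xs @ [x]))"
    by (rule is_der_additive[OF is_symbol_is_der[OF sy l]])
  then have "additive (\<lambda>a. c * \<sigma> (xs @ [x]) a)"
    by (simp add: additive_def distrib_left)
  then show ?thesis
    by (rule full_form_additive_ext[OF full is_der_additive[OF is_symbol_is_der[OF sy l]]])
      (simp add: is_symbol_ConsD[OF sy l] last distrib_left)
qed

lemma is_symbol_symbol_value:
  fixes \<sigma> :: "'e::ab_group_add list \<Rightarrow> 'a::comm_ring_1 \<Rightarrow> 'a"
  assumes full: "full_form B" and sy: "is_symbol alg smul B n \<omega> \<sigma>" and n: "4 \<le> n"
  shows "is_symbol alg smul B (n - 2) (\<lambda>xs. \<sigma> xs a) (\<lambda>zs b. symbol_of B (\<lambda>ys. \<sigma> ys b) zs a)"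
  unfolding is_symbol_def
proof (intro conjI allI impI)
  fix b
  have "Suc (Suc (n - 2 - 2)) = n - 2"
    using n by simp
  then have "multilin_R alg smul (Suc (Suc (n - 2 - 2))) (\<lambda>xs. \<sigma> xs b)"
    using sy unfolding is_symbol_def by simp
  then show "multilin_R alg smul (n - 2 - 2) (\<lambda>zs. symbol_of B (\<lambda>ys. \<sigma> ys b) zs a)"
    unfolding symbol_of_def case_prod_unfold
    by (intro multilin_R_sum_list multilin_R_add multilin_R_Cons2)
next
  fix zs :: "'e list" assume "length zs = n - 2 - 2"
  then have l: "length (x # y # zs) + 2 = n" for x y
    using n by simp
  show "is_der alg (\<lambda>b. symbol_of B (\<lambda>ys. \<sigma> ys b) zs a)"
    unfolding symbol_of_def case_prod_unfold
    by (intro is_der_sum_list is_der_add is_symbol_is_der[OF sy l])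
next
  fix us vs :: "'e list" and z w
  assume "length us + length vs = n - 2 - 2"
  then have l: "length (us @ [u, v] @ vs) + 2 = n" "length (x # y # us) + length vs + 2 = n"
    for x y u v
    using n by simp_all
  have swap: "\<sigma> (x # y # us @ vs) (B z w) = \<omega> (x # y # us @ [z, w] @ vs) + \<omega> (x # y # us @ [w, z] @ vs)"
    for x y
    using is_symbol_swapD[OF sy l(2)] by simp
  show "\<sigma> (us @ [z, w] @ vs) a + \<sigma> (us @ [w, z] @ vs) a =
      symbol_of B (\<lambda>ys. \<sigma> ys (B z w)) (us @ vs) a"
    unfolding is_symbol_eq_symbol_of[OF full sy l(1)]
    by (simp add: symbol_of_def case_prod_unfold swap sum_list_addf add_ac)
qed

lemma Omega_C_symbol_value:
  fixes \<sigma> :: "'e::ab_group_add list \<Rightarrow> 'a::comm_ring_1 \<Rightarrow> 'a"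
  assumes full: "full_form B" and om: "Omega_C alg smul B n \<omega>"
    and sy: "is_symbol alg smul B n \<omega> \<sigma>" and n: "2 \<le> n"
  shows "Omega_C alg smul B (n - 2) (\<lambda>xs. \<sigma> xs a)"
  unfolding Omega_C_def
proof (intro conjI impI allI)
  show "multilin_R alg smul (n - 2) (\<lambda>xs. \<sigma> xs a)"
    using sy unfolding is_symbol_def by blast
next
  fix xs :: "'e list" and x c assume "1 \<le> n - 2" "length xs = n - 2 - 1"
  then show "\<sigma> (xs @ [smul c x]) a = c * \<sigma> (xs @ [x]) a"
    by (intro symbol_value_last_A_linear[OF full om sy]) simp
next
  assume "2 \<le> n - 2"
  then show "\<exists>\<tau>. is_symbol alg smul B (n - 2) (\<lambda>xs. \<sigma> xs a) \<tau>"
    using is_symbol_symbol_value[OF full sy] by fastforce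
qed

lemma Omega_C_is_symbol_symbol_of:
  assumes full: "full_form B" and om: "Omega_C alg smul B n \<omega>" and n: "2 \<le> n"
  shows "is_symbol alg smul B n \<omega> (symbol_of B \<omega>)"
  using om n is_symbol_symbol_of[OF full] unfolding Omega_C_def by blast

text \<open>Evaluated at two values of the form, both sides expand
  into the same four values of the original map.\<close>
lemma symbol_of_symbol_commute:
  assumes full: "full_form B" and sy: "is_symbol alg smul B n \<eta> \<sigma>"
    and st: "\<And>a. is_symbol alg smul B (n - 2) (\<lambda>xs. \<sigma> xs a) (\<tau> a)"
    and zs: "length zs + 4 = n"
  shows "\<tau> a zs b = \<tau> b zs a"
proof -
  have lz: "length zs + 2 = n - 2" "length (x # y # zs) + 2 = n" for x y
    using zs by simp_all
  have additive_right: "additive (\<tau> a zs)" for a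
    by (rule is_der_additive[OF is_symbol_is_der[OF st lz(1)]])
  have additive_left: "additive (\<lambda>a. \<tau> a zs b)" for b
  proof -
    have "is_der alg (\<lambda>a. symbol_of B (\<lambda>xs. \<sigma> xs a) zs b)"
      unfolding symbol_of_def case_prod_unfold
      by (intro is_der_sum_list is_der_add is_symbol_is_der[OF sy lz(2)])
    then show ?thesis
      by (simp add: is_symbol_eq_symbol_of[OF full st lz(1)] is_der_additive)
  qed
  have on_form: "\<tau> a zs (B z w) = \<sigma> (z # w # zs) a + \<sigma> (w # z # zs) a" for a z w
    using is_symbol_ConsD[OF st lz(1)] .
  have swap: "\<sigma> (x # y # zs) (B z w) = \<eta> (x # y # z # w # zs) + \<eta> (x # y # w # z # zs)" for x y z w
    using is_symbol_swapD[OF sy, of "[x, y]" zs z w] zs by simp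
  have "\<tau> (B x y) zs (B z w) = \<tau> (B z w) zs (B x y)" for x y z w
  proof -
    have "\<tau> (B x y) zs (B z w) =
        \<eta> (x # y # z # w # zs) + \<eta> (y # x # z # w # zs) +
        (\<eta> (x # y # w # z # zs) + \<eta> (y # x # w # z # zs))"
      by (simp add: on_form is_symbol_ConsD[OF sy lz(2)])
    also have "\<dots> = \<tau> (B z w) zs (B x y)"
      by (simp add: on_form swap ac_simps)
    finally show ?thesis .
  qed
  then have "\<tau> a zs (B z w) = \<tau> (B z w) zs a" for a z w
    by (rule full_form_additive_ext[OF full additive_left additive_right])
  then show ?thesis
    by (rule full_form_additive_ext[OF full additive_right additive_left])
qed

lemma symbol_family_unique:
  assumes full: "full_form B"
    and \<pi>: "symbol_family alg smul B r \<omega> \<pi>" and \<pi>': "symbol_family alg smul B r \<omega> \<pi>'"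
  shows "2 * length as \<le> r \<Longrightarrow> length xs = r - 2 * length as \<Longrightarrow> \<pi>' as xs = \<pi> as xs"
proof (induction as arbitrary: xs rule: rev_induct)
  case Nil
  then show ?case using \<pi> \<pi>' unfolding symbol_family_def by simp
next
  case (snoc a as)
  then have n: "2 * (length as + 1) \<le> r" and l: "length xs + 2 = r - 2 * length as"
    by simp_all
  have "\<pi>' (as @ [a]) xs = symbol_of B (\<pi>' as) xs a"
    using is_symbol_eq_symbol_of[OF full _ l] \<pi>' n unfolding symbol_family_def by blast
  also have "\<dots> = symbol_of B (\<pi> as) xs a"
    using snoc.IH n l by (intro symbol_of_cong) simp
  also have "\<dots> = \<pi> (as @ [a]) xs"
    using is_symbol_eq_symbol_of[OF full _ l] \<pi> n unfolding symbol_family_def by metis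
  finally show ?case .
qed

fun iterated_symbol_rev :: "('e \<Rightarrow> 'e \<Rightarrow> 'a::comm_ring_1) \<Rightarrow> ('e list \<Rightarrow> 'a) \<Rightarrow> 'a list \<Rightarrow> 'e list \<Rightarrow> 'a" where
  "iterated_symbol_rev B \<omega> [] = \<omega>"
| "iterated_symbol_rev B \<omega> (a # as) = (\<lambda>xs. symbol_of B (iterated_symbol_rev B \<omega> as) xs a)"

definition iterated_symbol :: "('e \<Rightarrow> 'e \<Rightarrow> 'a::comm_ring_1) \<Rightarrow> ('e list \<Rightarrow> 'a) \<Rightarrow> 'a list \<Rightarrow> 'e list \<Rightarrow> 'a" where
  "iterated_symbol B \<omega> as = iterated_symbol_rev B \<omega> (rev as)"

lemma iterated_symbol_Nil [simp]: "iterated_symbol B \<omega> [] = \<omega>"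
  by (simp add: iterated_symbol_def)

lemma iterated_symbol_snoc [simp]:
  "iterated_symbol B \<omega> (as @ [a]) xs = symbol_of B (iterated_symbol B \<omega> as) xs a"
  by (simp add: iterated_symbol_def)

context
  fixes alg :: "'r::comm_ring_1 \<Rightarrow> 'a::comm_ring_1" and smul :: "'a \<Rightarrow> 'e::ab_group_add \<Rightarrow> 'e"
    and B :: "'e \<Rightarrow> 'e \<Rightarrow> 'a" and \<omega> :: "'e list \<Rightarrow> 'a" and r :: nat
  assumes full: "full_form B" and om: "Omega_C alg smul B r \<omega>"
begin

lemma Omega_C_iterated_symbol:
  "2 * length as \<le> r \<Longrightarrow> Omega_C alg smul B (r - 2 * length as) (iterated_symbol B \<omega> as)"
proof (induction as rule: rev_induct)
  case Nil
  then show ?case using om by simp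
next
  case (snoc a as)
  then have om': "Omega_C alg smul B (r - 2 * length as) (iterated_symbol B \<omega> as)"
    and n: "2 \<le> r - 2 * length as"
    by simp_all
  have "iterated_symbol B \<omega> (as @ [a]) = (\<lambda>xs. symbol_of B (iterated_symbol B \<omega> as) xs a)"
    by auto
  then show ?case
    using Omega_C_symbol_value[OF full om' Omega_C_is_symbol_symbol_of[OF full om' n] n, of a]
    by (simp add: diff_diff_add)
qed

lemma is_symbol_iterated_symbol:
  "2 * (length as + 1) \<le> r \<Longrightarrow>
    is_symbol alg smul B (r - 2 * length as) (iterated_symbol B \<omega> as) (\<lambda>xs a. iterated_symbol B \<omega> (as @ [a]) xs)"
  using Omega_C_is_symbol_symbol_of[OF full Omega_C_iterated_symbol] by simp

lemma is_der_iterated_symbol: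
  "2 * length as \<le> r \<Longrightarrow> i < length as \<Longrightarrow> length xs = r - 2 * length as \<Longrightarrow>
    is_der alg (\<lambda>a. iterated_symbol B \<omega> (as[i := a]) xs)"
proof (induction as arbitrary: i xs rule: rev_induct)
  case Nil
  then show ?case by simp
next
  case (snoc d as)
  then have n: "2 * (length as + 1) \<le> r" and l: "length xs + 2 = r - 2 * length as"
    by simp_all
  show ?case
  proof (cases "i = length as")
    case True
    then show ?thesis
      using is_symbol_is_der[OF is_symbol_iterated_symbol[OF n] l] by simp
  next
    case False
    then have i: "i < length as"
      using snoc.prems by simp
    have IH: "is_der alg (\<lambda>a. iterated_symbol B \<omega> (as[i := a]) zs)" if "length zs = length xs + 2" for zs
      using snoc.IH[OF _ i] n l that by simp
    show ?thesis
      using i unfolding list_update_append1[OF i] iterated_symbol_snoc symbol_of_def case_prod_unfold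
      by (intro is_der_sum_list is_der_add IH) simp_all
  qed
qed

lemma iterated_symbol_swap:
  assumes n: "2 * (length ds + 2) \<le> r" and l: "length xs = r - 2 * (length ds + 2)"
  shows "iterated_symbol B \<omega> (ds @ [a, b]) xs = iterated_symbol B \<omega> (ds @ [b, a]) xs"
proof -
  have "is_symbol alg smul B (r - 2 * length ds - 2) (iterated_symbol B \<omega> (ds @ [c]))
      (\<lambda>xs b. iterated_symbol B \<omega> (ds @ [c, b]) xs)" for c
    using is_symbol_iterated_symbol[of "ds @ [c]"] n by (simp add: diff_diff_add del: iterated_symbol_snoc)
  from symbol_of_symbol_commute[OF full is_symbol_iterated_symbol this, of xs b a] n l
  show ?thesis by simp
qed

lemma iterated_symbol_mset_eq:
  "length as = p \<Longrightarrow> mset as = mset bs \<Longrightarrow> 2 * p \<le> r \<Longrightarrow> length xs = r - 2 * p \<Longrightarrow>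
    iterated_symbol B \<omega> as xs = iterated_symbol B \<omega> bs xs"
proof (induction p arbitrary: as bs xs)
  case 0
  then show ?case by simp
next
  case (Suc p)
  obtain as' a where as: "as = as' @ [a]"
    using Suc.prems(1) by (cases as rule: rev_exhaust) auto
  obtain bs' b where bs: "bs = bs' @ [b]"
    using Suc.prems(1,2) by (cases bs rule: rev_exhaust) auto
  have m: "add_mset a (mset as') = add_mset b (mset bs')"
    using Suc.prems(2) as bs by simp
  have p: "length as' = p"
    using Suc.prems(1) as by simp
  have snoc_cong: "iterated_symbol B \<omega> (cs @ [c]) xs = iterated_symbol B \<omega> (cs' @ [c]) xs"
    if "length cs = p" "mset cs = mset cs'" for cs cs' c
    unfolding iterated_symbol_snoc
    by (rule symbol_of_cong) (use Suc.IH[OF that] Suc.prems(3,4) in simp)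
  show ?case
  proof (cases "a = b")
    case True
    then show ?thesis
      using snoc_cong[OF p] m as bs by simp
  next
    case False
    then have "b \<in> set as'"
      using m by (metis add_mset_eq_single insert_noteq_member set_mset_mset)
    define ds where "ds = remove1 b as'"
    have ds1: "mset as' = mset (ds @ [b])"
      using \<open>b \<in> set as'\<close> unfolding ds_def by simp
    then have ds2: "mset (ds @ [a]) = mset bs'"
      using m by (simp add: add_mset_commute)
    have ds3: "length ds + 1 = p"
      using ds1 p by (metis length_append_singleton size_mset Suc_eq_plus1)
    have "iterated_symbol B \<omega> (as' @ [a]) xs = iterated_symbol B \<omega> (ds @ [b, a]) xs"
      using snoc_cong[OF p ds1] by simp
    also have "\<dots> = iterated_symbol B \<omega> (ds @ [a, b]) xs"
      using iterated_symbol_swap ds3 Suc.prems(3,4) by simp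
    also have "\<dots> = iterated_symbol B \<omega> (bs' @ [b]) xs"
      using snoc_cong[of "ds @ [a]" bs' b] ds2 ds3 by simp
    finally show ?thesis
      using as bs by simp
  qed
qed

lemma SDer_Omega_iterated_symbol:
  assumes p: "2 * p \<le> r"
  shows "SDer_Omega alg smul B r p (iterated_symbol B \<omega>)"
  unfolding SDer_Omega_def
proof (intro conjI)
  show "\<forall>as. length as = p \<longrightarrow> Omega_C alg smul B (r - 2 * p) (iterated_symbol B \<omega> as)"
    using p Omega_C_iterated_symbol by blast
  show "\<forall>as i a b c xs. length as = p \<and> i < p \<and> length xs = r - 2 * p \<longrightarrow>
      iterated_symbol B \<omega> (as[i := a + b]) xs =
        iterated_symbol B \<omega> (as[i := a]) xs + iterated_symbol B \<omega> (as[i := b]) xs \<and>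
      iterated_symbol B \<omega> (as[i := alg c * a]) xs = alg c * iterated_symbol B \<omega> (as[i := a]) xs \<and>
      iterated_symbol B \<omega> (as[i := a * b]) xs =
        a * iterated_symbol B \<omega> (as[i := b]) xs + b * iterated_symbol B \<omega> (as[i := a]) xs"
    using p is_der_iterated_symbol unfolding is_der_def by blast
  show "\<forall>as bs xs. length as = p \<and> mset as = mset bs \<and> length xs = r - 2 * p \<longrightarrow>
      iterated_symbol B \<omega> as xs = iterated_symbol B \<omega> bs xs"
    using p iterated_symbol_mset_eq by blast
qed

lemma symbol_family_iterated_symbol: "symbol_family alg smul B r \<omega> (iterated_symbol B \<omega>)"
  unfolding symbol_family_def
  using SDer_Omega_iterated_symbol is_symbol_iterated_symbol by simp

end

theorem mainTheorem8:
  fixes alg :: "'r::comm_ring_1 \<Rightarrow> 'a::comm_ring_1"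
    and smul :: "'a \<Rightarrow> 'e::ab_group_add \<Rightarrow> 'e"
    and B :: "'e \<Rightarrow> 'e \<Rightarrow> 'a"
    and \<omega> :: "'e list \<Rightarrow> 'a"
    and r :: nat
  assumes QR_nontriv: "(0::'r) \<noteq> 1"
    and QR_inv: "\<forall>n::nat. 0 < n \<longrightarrow> (\<exists>y::'r. of_nat n * y = 1)"
    and alg: "ring_hom_map alg"
    and mod: "is_module smul"
    and proj: "fg_projective smul"
    and bil: "bilinear_form smul B"
    and sym: "symmetric_form B"
    and nondeg: "strongly_nondegenerate smul B"
    and full: "full_form B"
    and om: "Omega_C alg smul B r \<omega>"
    and r2: "2 \<le> r"
  shows "\<exists>\<pi>. symbol_family alg smul B r \<omega> \<pi> \<and>
           (\<forall>\<pi>'. symbol_family alg smul B r \<omega> \<pi>' \<longrightarrow>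
              (\<forall>as xs. 2 * length as \<le> r \<and> length xs = r - 2 * length as \<longrightarrow>
                 \<pi>' as xs = \<pi> as xs))"
proof -
  have family: "symbol_family alg smul B r \<omega> (iterated_symbol B \<omega>)"
    by (rule symbol_family_iterated_symbol[OF full om])
  show ?thesis
    using family symbol_family_unique[OF full family] by blast
qed

end
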